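(* Let $k\ge 2$ and let $\mathbf{x}$ be a random vector in $\mathbb{R}^k$ (asset returns) with mean $\boldsymbol{\mu}=E(\mathbf{x})$ and covariance matrix $\boldsymbol{\Sigma}=\mathrm{Var}(\mathbf{x})$, symmetric and positive definite. Let $n\ge 2$, let $\alpha_1,\dots,\alpha_n>0$ be pairwise distinct risk aversions, $\beta_1,\dots,\beta_n>0$ with $\sum_{i=1}^n\beta_i=1$ relative wealth proportions, and $\phi_1,\dots,\phi_n>0$ mimicking coefficients. For a $k\times n$ matrix $\mathbf{W}=(\mathbf{w}_1,\dots,\mathbf{w}_n)$ of portfolio weight vectors (with $\mathbf{w}_i'\mathbf{1}=1$, where $\mathbf{1}\in\mathbb{R}^k$ is the vector of ones) put $\mathbf{w}_{\mathbf{f}}=\mathbf{W}\boldsymbol{\beta}=\sum_{i=1}^n\beta_i\mathbf{w}_i$, $\boldsymbol\beta=(\beta_1,\dots,\beta_n)'$, and $$EU_i^*=\mathbf{w}_i'\boldsymbol{\mu}-\frac{\alpha_i}{2}\mathbf{w}_i'\boldsymbol{\Sigma}\mathbf{w}_i-\frac{\phi_i}{2}(\mathbf{w}_i-\mathbf{w}_{\mathbf{f}})'\boldsymbol{\Sigma}(\mathbf{w}_i-\mathbf{w}_{\mathbf{f}}),\qquad EU^*=\sum_{i=1}^n\beta_i EU_i^*.$$ Then $$EU^*=E(\boldsymbol{\beta}'\mathbf{W}'\mathbf{x})-\frac12 E\big[(\mathbf{x}-E(\mathbf{x}))'\mathbf{W}\mathbf{A}\mathbf{W}'(\mathbf{x}-E(\mathbf{x}))\big]=\boldsymbol{\beta}'\mathbf{W}'\boldsymbol{\mu}-\frac12\operatorname{tr}(\mathbf{A}\mathbf{W}'\boldsymbol{\Sigma}\mathbf{W}),$$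 where the $n\times n$ matrix $\mathbf{A}$ is $$\mathbf{A}=(\mathbf{A}_0+\boldsymbol{\Phi})\mathbf{B}+(\bar\phi\mathbf{I}_n-2\boldsymbol{\Phi})\boldsymbol{\beta}\boldsymbol{\beta}',\qquad \bar\phi=\boldsymbol\beta'\boldsymbol\phi=\sum_{i=1}^n\beta_i\phi_i,$$ with $\mathbf{A}_0=\mathrm{diag}(\alpha_1,\dots,\alpha_n)$, $\boldsymbol{\Phi}=\mathrm{diag}(\phi_1,\dots,\phi_n)$, $\mathbf{B}=\mathrm{diag}(\beta_1,\dots,\beta_n)$, $\boldsymbol\phi=(\phi_1,\dots,\phi_n)'$, and $\mathbf{I}_n$ the $n\times n$ identity.
   Context: $EU_i^*$ is the mean-variance objective of investor $i$ penalized by the $\boldsymbol\Sigma$-weighted squared distance of his portfolio from the aggregate (wealth-weighted) portfolio $\mathbf{w}_{\mathbf f}$; $EU^*$ is the aggregate objective of a mutual fund pooling the investors. Short sales are allowed (weights may be negative). *)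

theory Defs
  imports "HOL-Probability.Probability"
begin

text \<open>Matrices: a k x n matrix is real^'n^'k (rows indexed by 'k). Vectors of
  parameters alpha, beta, phi are in real^'n.\<close>

definition diag_mat :: "real^'n \<Rightarrow> real^'n^'n" where
  "diag_mat v = (\<chi> i j. if i = j then v $ i else 0)"

definition outer_prod :: "real^'n \<Rightarrow> real^'m \<Rightarrow> real^'m^'n" where
  "outer_prod u v = (\<chi> i j. u $ i * v $ j)"

definition wf :: "real^'n^'k \<Rightarrow> real^'n \<Rightarrow> real^'k" where
  "wf W \<beta> = W *v \<beta>"

definition EU_i :: "real^'k \<Rightarrow> real^'k^'k \<Rightarrow> real^'n \<Rightarrow> real^'n \<Rightarrow> real^'n
                     \<Rightarrow> real^'n^'k \<Rightarrow> 'n \<Rightarrow> real" where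
  "EU_i \<mu> \<Sigma> \<alpha> \<phi> \<beta> W i =
     column i W \<bullet> \<mu>
     - \<alpha> $ i / 2 * (column i W \<bullet> (\<Sigma> *v column i W))
     - \<phi> $ i / 2 * ((column i W - wf W \<beta>) \<bullet> (\<Sigma> *v (column i W - wf W \<beta>)))"

definition EU :: "real^'k \<Rightarrow> real^'k^'k \<Rightarrow> real^'n \<Rightarrow> real^'n \<Rightarrow> real^'n
                   \<Rightarrow> real^'n^'k \<Rightarrow> real" where
  "EU \<mu> \<Sigma> \<alpha> \<phi> \<beta> W = (\<Sum>i\<in>UNIV. \<beta> $ i * EU_i \<mu> \<Sigma> \<alpha> \<phi> \<beta> W i)"

definition A_mat :: "real^'n \<Rightarrow> real^'n \<Rightarrow> real^'n \<Rightarrow> real^'n^'n" where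
  "A_mat \<alpha> \<phi> \<beta> =
     (diag_mat \<alpha> + diag_mat \<phi>) ** diag_mat \<beta>
     + ((\<beta> \<bullet> \<phi>) *\<^sub>R mat 1 - 2 *\<^sub>R diag_mat \<phi>) ** outer_prod \<beta> \<beta>"

definition mean_vec :: "'a measure \<Rightarrow> ('a \<Rightarrow> real^'k) \<Rightarrow> real^'k" where
  "mean_vec M X = (\<chi> j. integral\<^sup>L M (\<lambda>\<omega>. X \<omega> $ j))"

definition cov_mat :: "'a measure \<Rightarrow> ('a \<Rightarrow> real^'k) \<Rightarrow> real^'k^'k" where
  "cov_mat M X = (\<chi> i j. integral\<^sup>L M (\<lambda>\<omega>. (X \<omega> $ i - mean_vec M X $ i) * (X \<omega> $ j - mean_vec M X $ j)))"

end

theory Submission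
  imports Defs
begin

text \<open>Write \<open>G = W' \<Sigma> W\<close> for the Gram matrix of the portfolios, \<open>G\<^sub>a\<^sub>b = w\<^sub>a' \<Sigma> w\<^sub>b\<close>.
  Expanding the penalty \<open>(w\<^sub>i - W\<beta>)' \<Sigma> (w\<^sub>i - W\<beta>) = G\<^sub>i\<^sub>i - 2 (G\<beta>)\<^sub>i + \<beta>'G\<beta>\<close> makes
  \<open>EU\<^sup>*\<close> a linear function of the entries of \<open>G\<close>, and reading off the coefficients
  gives \<open>\<beta>'W'\<mu> - tr(A G)/2\<close>. The expectations are the same identity seen through
  linearity of the integral: \<open>E(x) = \<mu>\<close> and \<open>E[(x - \<mu>)' Q (x - \<mu>)] = tr(Q \<Sigma>)\<close>.\<close>

lemma inner_symmetric_matrix_commute: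
  fixes C :: "real^'k^'k"
  assumes "transpose C = C"
  shows "u \<bullet> (C *v v) = v \<bullet> (C *v u)"
  by (metis assms dot_lmul_matrix inner_commute transpose_matrix_vector)

lemma quadratic_form_diff:
  fixes C :: "real^'k^'k"
  assumes "transpose C = C"
  shows "(u - v) \<bullet> (C *v (u - v)) = u \<bullet> (C *v u) - 2 * (u \<bullet> (C *v v)) + v \<bullet> (C *v v)"
  using inner_symmetric_matrix_commute[OF assms, of v u]
  by (simp add: matrix_vector_mult_diff_distrib inner_diff_left inner_diff_right)

lemma wf_eq_sum_columns: "wf W \<beta> = (\<Sum>b\<in>UNIV. \<beta> $ b *\<^sub>R column b W)"
  unfolding wf_def by (simp add: matrix_mult_sum scalar_mult_eq_scaleR)

lemma inner_column_matrix_column: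
  fixes C :: "real^'k^'k" and W :: "real^'n^'k"
  shows "column a W \<bullet> (C *v column b W) = (transpose W ** C ** W) $ a $ b"
  apply (simp add: inner_vec_def matrix_vector_mult_def matrix_matrix_mult_def transpose_def
      column_def sum_distrib_left sum_distrib_right)
  by (subst sum.swap) (simp add: algebra_simps)

lemma symmetric_gram_matrix:
  fixes C :: "real^'k^'k" and W :: "real^'n^'k"
  assumes "transpose C = C"
  shows "transpose (transpose W ** C ** W) = transpose W ** C ** W"
  using assms by (simp add: matrix_transpose_mul matrix_mul_assoc)

lemma diag_mat_mult_nth: "(diag_mat v ** B) $ a $ b = v $ a * B $ a $ b"
  unfolding matrix_matrix_mult_def diag_mat_def by (subst sum.remove[of _ a]) auto

lemma A_mat_eq_diag:
  "A_mat \<alpha> \<phi> \<beta> = diag_mat (\<alpha> + \<phi>) ** diag_mat \<beta>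
     + diag_mat ((\<beta> \<bullet> \<phi>) *\<^sub>R 1 - 2 *\<^sub>R \<phi>) ** outer_prod \<beta> \<beta>"
proof -
  have "diag_mat \<alpha> + diag_mat \<phi> = diag_mat (\<alpha> + \<phi>)"
    by (simp add: vec_eq_iff diag_mat_def)
  moreover have "(\<beta> \<bullet> \<phi>) *\<^sub>R mat 1 - 2 *\<^sub>R diag_mat \<phi> = diag_mat ((\<beta> \<bullet> \<phi>) *\<^sub>R 1 - 2 *\<^sub>R \<phi>)"
    by (simp add: vec_eq_iff diag_mat_def mat_def)
  ultimately show ?thesis
    unfolding A_mat_def by simp
qed

lemma A_mat_nth:
  "A_mat \<alpha> \<phi> \<beta> $ a $ b =
     (if a = b then (\<alpha> $ a + \<phi> $ a) * \<beta> $ a else 0) + ((\<beta> \<bullet> \<phi>) - 2 * \<phi> $ a) * \<beta> $ a * \<beta> $ b"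
  by (simp add: A_mat_eq_diag diag_mat_mult_nth) (simp add: diag_mat_def outer_prod_def)

lemma trace_A_mat_mult:
  fixes G :: "real^'n^'n"
  assumes "transpose G = G"
  shows "trace (A_mat \<alpha> \<phi> \<beta> ** G) =
     (\<Sum>a\<in>UNIV. (\<alpha> $ a + \<phi> $ a) * \<beta> $ a * G $ a $ a)
     + (\<beta> \<bullet> \<phi>) * (\<Sum>a\<in>UNIV. \<Sum>b\<in>UNIV. \<beta> $ a * \<beta> $ b * G $ a $ b)
     - 2 * (\<Sum>a\<in>UNIV. \<phi> $ a * \<beta> $ a * (\<Sum>b\<in>UNIV. \<beta> $ b * G $ a $ b))"
proof -
  have G_sym: "G $ b $ a = G $ a $ b" for a b
    using arg_cong[OF assms, of "\<lambda>M. M $ a $ b"] by (simp add: transpose_def)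
  have diagonal: "(\<Sum>b\<in>UNIV. (if a = b then c else 0) * G $ a $ b) = c * G $ a $ a" for a c
    by (subst sum.remove[of _ a]) auto
  have rank_two: "(\<Sum>a\<in>UNIV. \<Sum>b\<in>UNIV. (c - 2 * \<phi> $ a) * \<beta> $ a * \<beta> $ b * G $ a $ b)
      = c * (\<Sum>a\<in>UNIV. \<Sum>b\<in>UNIV. \<beta> $ a * \<beta> $ b * G $ a $ b)
        - 2 * (\<Sum>a\<in>UNIV. \<phi> $ a * \<beta> $ a * (\<Sum>b\<in>UNIV. \<beta> $ b * G $ a $ b))" for c
    by (simp add: left_diff_distrib sum_subtractf sum_distrib_left mult.assoc)
  have "trace (A_mat \<alpha> \<phi> \<beta> ** G) = (\<Sum>a\<in>UNIV. \<Sum>b\<in>UNIV. A_mat \<alpha> \<phi> \<beta> $ a $ b * G $ a $ b)"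
    by (simp add: trace_def matrix_matrix_mult_def G_sym)
  also have "\<dots> = (\<Sum>a\<in>UNIV. (\<alpha> $ a + \<phi> $ a) * \<beta> $ a * G $ a $ a)
      + (\<Sum>a\<in>UNIV. \<Sum>b\<in>UNIV. ((\<beta> \<bullet> \<phi>) - 2 * \<phi> $ a) * \<beta> $ a * \<beta> $ b * G $ a $ b)"
    by (simp only: A_mat_nth distrib_right sum.distrib diagonal)
  finally show ?thesis
    unfolding rank_two by simp
qed

lemma EU_i_gram:
  fixes \<Sigma> :: "real^'k^'k" and W :: "real^'n^'k"
  assumes "transpose \<Sigma> = \<Sigma>"
  defines "G \<equiv> transpose W ** \<Sigma> ** W"
  shows "EU_i \<mu> \<Sigma> \<alpha> \<phi> \<beta> W i =
     column i W \<bullet> \<mu> - \<alpha> $ i / 2 * G $ i $ i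
     - \<phi> $ i / 2 * (G $ i $ i - 2 * (\<Sum>b\<in>UNIV. \<beta> $ b * G $ i $ b)
                      + (\<Sum>a\<in>UNIV. \<Sum>b\<in>UNIV. \<beta> $ a * \<beta> $ b * G $ a $ b))"
proof -
  have "column i W \<bullet> (\<Sigma> *v wf W \<beta>) = (\<Sum>b\<in>UNIV. \<beta> $ b * G $ i $ b)"
    by (simp add: G_def wf_eq_sum_columns linear_sum[OF matrix_vector_mul_linear] matrix_vector_mult_scaleR
        inner_sum_right inner_column_matrix_column)
  moreover have "wf W \<beta> \<bullet> (\<Sigma> *v wf W \<beta>) = (\<Sum>a\<in>UNIV. \<Sum>b\<in>UNIV. \<beta> $ a * \<beta> $ b * G $ a $ b)"
    apply (simp add: G_def wf_eq_sum_columns linear_sum[OF matrix_vector_mul_linear] matrix_vector_mult_scaleR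
        inner_sum_left inner_sum_right inner_column_matrix_column sum_distrib_left)
    by (subst sum.swap) (simp add: ac_simps)
  ultimately show ?thesis
    by (simp add: EU_i_def quadratic_form_diff[OF assms(1)] G_def inner_column_matrix_column)
qed

lemma inner_transpose_mult: "(\<beta>::real^'n) \<bullet> (transpose W *v x) = (W *v \<beta>) \<bullet> x"
  by (metis dot_lmul_matrix inner_commute transpose_matrix_vector)

lemma sum_weighted_penalized_objectives:
  fixes b a p l g t :: "'n \<Rightarrow> real"
  shows "(\<Sum>i\<in>I. b i * (l i - a i / 2 * g i - p i / 2 * (g i - 2 * t i + q)))
     = (\<Sum>i\<in>I. b i * l i) - 1/2 * ((\<Sum>i\<in>I. (a i + p i) * b i * g i)
       + (\<Sum>i\<in>I. b i * p i) * q - 2 * (\<Sum>i\<in>I. p i * b i * t i))"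
proof -
  have pointwise: "b i * (l i - a i / 2 * g i - p i / 2 * (g i - 2 * t i + q))
      = b i * l i - 1/2 * ((a i + p i) * b i * g i) - 1/2 * (b i * p i * q) + p i * b i * t i" for i
    by (simp add: field_simps)
  show ?thesis
    unfolding pointwise
    by (simp add: sum.distrib sum_subtractf sum_distrib_left sum_distrib_right right_diff_distrib
        distrib_left)
qed

lemma EU_eq_trace:
  fixes \<Sigma> :: "real^'k^'k" and W :: "real^'n^'k"
  assumes "transpose \<Sigma> = \<Sigma>"
  shows "EU \<mu> \<Sigma> \<alpha> \<phi> \<beta> W =
     \<beta> \<bullet> (transpose W *v \<mu>) - 1/2 * trace (A_mat \<alpha> \<phi> \<beta> ** transpose W ** \<Sigma> ** W)"
proof -
  define G where "G = transpose W ** \<Sigma> ** W"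
  define T where "T i = (\<Sum>b\<in>UNIV. \<beta> $ b * G $ i $ b)" for i
  define Q where "Q = (\<Sum>a\<in>UNIV. \<Sum>b\<in>UNIV. \<beta> $ a * \<beta> $ b * G $ a $ b)"
  have linear: "(\<Sum>i\<in>UNIV. \<beta> $ i * (column i W \<bullet> \<mu>)) = \<beta> \<bullet> (transpose W *v \<mu>)"
    by (simp add: inner_vec_def matrix_vector_mult_def transpose_def column_def sum_distrib_left)
  have "trace (A_mat \<alpha> \<phi> \<beta> ** transpose W ** \<Sigma> ** W) = trace (A_mat \<alpha> \<phi> \<beta> ** G)"
    by (simp add: G_def matrix_mul_assoc)
  also have "\<dots> = (\<Sum>a\<in>UNIV. (\<alpha> $ a + \<phi> $ a) * \<beta> $ a * G $ a $ a)
      + (\<Sum>a\<in>UNIV. \<beta> $ a * \<phi> $ a) * Q - 2 * (\<Sum>a\<in>UNIV. \<phi> $ a * \<beta> $ a * T a)"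
    unfolding trace_A_mat_mult[OF symmetric_gram_matrix[OF assms, of W, folded G_def]]
    by (simp add: Q_def T_def inner_vec_def)
  finally have trace: "trace (A_mat \<alpha> \<phi> \<beta> ** transpose W ** \<Sigma> ** W) = \<dots>" .
  have "EU \<mu> \<Sigma> \<alpha> \<phi> \<beta> W = (\<Sum>i\<in>UNIV. \<beta> $ i * (column i W \<bullet> \<mu> - \<alpha> $ i / 2 * G $ i $ i
        - \<phi> $ i / 2 * (G $ i $ i - 2 * T i + Q)))"
    by (simp only: EU_def EU_i_gram[OF assms] G_def T_def Q_def)
  also have "\<dots> = (\<Sum>i\<in>UNIV. \<beta> $ i * (column i W \<bullet> \<mu>)) - 1/2 * ((\<Sum>a\<in>UNIV. (\<alpha> $ a + \<phi> $ a) * \<beta> $ a * G $ a $ a)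
      + (\<Sum>a\<in>UNIV. \<beta> $ a * \<phi> $ a) * Q - 2 * (\<Sum>a\<in>UNIV. \<phi> $ a * \<beta> $ a * T a))"
    by (rule sum_weighted_penalized_objectives[where b = "\<lambda>i. \<beta> $ i" and a = "\<lambda>i. \<alpha> $ i"
          and p = "\<lambda>i. \<phi> $ i" and l = "\<lambda>i. column i W \<bullet> \<mu>" and g = "\<lambda>i. G $ i $ i"])
  finally show ?thesis
    unfolding linear trace .
qed

lemma integrable_mult_of_square_integrable:
  fixes f g :: "'a \<Rightarrow> real"
  assumes "f \<in> borel_measurable M" "g \<in> borel_measurable M"
    and "integrable M (\<lambda>x. (f x)\<^sup>2)" "integrable M (\<lambda>x. (g x)\<^sup>2)"
  shows "integrable M (\<lambda>x. f x * g x)"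
proof (rule Bochner_Integration.integrable_bound)
  show "integrable M (\<lambda>x. (f x)\<^sup>2 + (g x)\<^sup>2)"
    using assms by simp
  have "\<bar>a * b\<bar> \<le> a\<^sup>2 + b\<^sup>2" for a b :: real
    using sum_squares_bound[of "\<bar>a\<bar>" "\<bar>b\<bar>"] mult_nonneg_nonneg[OF abs_ge_zero abs_ge_zero, of a b]
    unfolding abs_mult power2_abs by linarith
  then show "AE x in M. norm (f x * g x) \<le> norm ((f x)\<^sup>2 + (g x)\<^sup>2)"
    by simp
qed (use assms in measurable)

lemma (in finite_measure) integrable_centered_products:
  fixes X :: "'a \<Rightarrow> real^'k"
  assumes "\<And>j. integrable M (\<lambda>\<omega>. X \<omega> $ j)" "\<And>j. integrable M (\<lambda>\<omega>. (X \<omega> $ j)\<^sup>2)"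
  shows "integrable M (\<lambda>\<omega>. (X \<omega> $ i - c) * (X \<omega> $ j - d))"
proof -
  have "integrable M (\<lambda>\<omega>. (X \<omega> $ l - e)\<^sup>2)" for l e
    using assms by (simp add: power2_diff)
  then show ?thesis
    using assms by (intro integrable_mult_of_square_integrable) auto
qed

lemma integral_inner_mean_vec:
  fixes X :: "'a \<Rightarrow> real^'k"
  assumes "\<And>j. integrable M (\<lambda>\<omega>. X \<omega> $ j)"
  shows "integral\<^sup>L M (\<lambda>\<omega>. v \<bullet> X \<omega>) = v \<bullet> mean_vec M X"
  using assms by (simp add: inner_vec_def mean_vec_def)

lemma cov_mat_symmetric: "transpose (cov_mat M X) = cov_mat M X"
  by (simp add: cov_mat_def transpose_def vec_eq_iff mult.commute)

lemma integral_centered_quadratic_form: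
  fixes M :: "'a measure" and X :: "'a \<Rightarrow> real^'k"
  defines "m \<equiv> mean_vec M X"
  assumes "\<And>i j. integrable M (\<lambda>\<omega>. (X \<omega> $ i - m $ i) * (X \<omega> $ j - m $ j))"
  shows "integral\<^sup>L M (\<lambda>\<omega>. (X \<omega> - m) \<bullet> (Q *v (X \<omega> - m))) = trace (Q ** cov_mat M X)"
  using assms
  by (simp add: inner_vec_def matrix_vector_mult_def sum_distrib_left trace_def
      matrix_matrix_mult_def cov_mat_def mult.commute mult.left_commute)

theorem proposition1:
  fixes M :: "'a measure" and X :: "'a \<Rightarrow> real^'k"
    and \<alpha> \<beta> \<phi> :: "real^'n" and W :: "real^'n^'k"
  assumes "prob_space M"
    and "CARD('k) \<ge> 2" and "CARD('n) \<ge> 2"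
    and "X \<in> borel_measurable M"
    and "\<And>j. integrable M (\<lambda>\<omega>. X \<omega> $ j)"
    and "\<And>j. integrable M (\<lambda>\<omega>. (X \<omega> $ j)\<^sup>2)"
    and "\<forall>v::real^'k. v \<noteq> 0 \<longrightarrow> v \<bullet> (cov_mat M X *v v) > 0"
    and "\<And>i. \<alpha> $ i > 0" and "inj (\<lambda>i. \<alpha> $ i)"
    and "\<And>i. \<beta> $ i > 0" and "(\<Sum>i\<in>UNIV. \<beta> $ i) = 1"
    and "\<And>i. \<phi> $ i > 0"
    and "\<And>i. column i W \<bullet> (\<chi> j. 1) = 1"
  shows "EU (mean_vec M X) (cov_mat M X) \<alpha> \<phi> \<beta> W =
           integral\<^sup>L M (\<lambda>\<omega>. \<beta> \<bullet> (transpose W *v X \<omega>))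
           - 1/2 * integral\<^sup>L M (\<lambda>\<omega>. (X \<omega> - mean_vec M X) \<bullet>
                 ((W ** A_mat \<alpha> \<phi> \<beta> ** transpose W) *v (X \<omega> - mean_vec M X)))
       \<and> integral\<^sup>L M (\<lambda>\<omega>. \<beta> \<bullet> (transpose W *v X \<omega>))
           - 1/2 * integral\<^sup>L M (\<lambda>\<omega>. (X \<omega> - mean_vec M X) \<bullet>
                 ((W ** A_mat \<alpha> \<phi> \<beta> ** transpose W) *v (X \<omega> - mean_vec M X)))
         = \<beta> \<bullet> (transpose W *v mean_vec M X)
           - 1/2 * trace (A_mat \<alpha> \<phi> \<beta> ** transpose W ** cov_mat M X ** W)"
proof -
  interpret prob_space M by fact
  let ?A = "A_mat \<alpha> \<phi> \<beta>" and ?C = "cov_mat M X"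
  have EU: "EU (mean_vec M X) ?C \<alpha> \<phi> \<beta> W =
      \<beta> \<bullet> (transpose W *v mean_vec M X) - 1/2 * trace (?A ** transpose W ** ?C ** W)"
    by (rule EU_eq_trace[OF cov_mat_symmetric])
  have mean: "integral\<^sup>L M (\<lambda>\<omega>. \<beta> \<bullet> (transpose W *v X \<omega>)) = \<beta> \<bullet> (transpose W *v mean_vec M X)"
    unfolding inner_transpose_mult by (rule integral_inner_mean_vec[OF assms(5)])
  have "integral\<^sup>L M (\<lambda>\<omega>. (X \<omega> - mean_vec M X) \<bullet> ((W ** ?A ** transpose W) *v (X \<omega> - mean_vec M X)))
      = trace (W ** ?A ** transpose W ** ?C)"
    by (rule integral_centered_quadratic_form[OF integrable_centered_products[OF assms(5,6)]])
  also have "\<dots> = trace (W ** (?A ** transpose W ** ?C))"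
    by (simp add: matrix_mul_assoc)
  also have "\<dots> = trace (?A ** transpose W ** ?C ** W)"
    by (rule trace_mul_sym)
  finally show ?thesis
    using EU mean by simp
qed

end
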